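(* Let $M$ be a $\bar{\mathfrak D}$-module (not necessarily a weight module) on which the subalgebra $\bar{\mathfrak D}^{+}$ acts locally finitely. Then: (i) $M$ contains a nonzero vector $v$ such that $\bar{\mathfrak D}^{+}v\subseteq\mathbb Cv$; (ii) if $M$ is simple, then $M$ is a Whittaker module or a highest weight module.
   Context: $\bar{\mathfrak D}$ is the Lie algebra with basis $\{d_m,h_r,\bar c_1,\bar c_2,\bar c_3:m,r\in\mathbb Z\}$, brackets $[d_m,d_n]=(m-n)d_{m+n}+\delta_{m+n,0}\frac{m^3-m}{12}\bar c_1$, $[d_m,h_r]=-rh_{m+r}+\delta_{m+r,0}(m^2+m)\bar c_2$, $[h_r,h_s]=r\delta_{r+s,0}\bar c_3$, with $\bar c_i$ central. $\bar{\mathfrak D}^{\pm}=\bigoplus_{n\ge1}(\mathbb Cd_{\pm n}\oplus\mathbb Ch_{\pm n})$ and $\bar{\mathfrak D}^0=\mathbb Cd_0\oplus\mathbb Ch_0\oplus\mathbb C\bar c_1\oplus\mathbb C\bar c_2\oplus\mathbb C\bar c_3$. $\bar{\mathfrak D}^+$ acts locally finitely on $M$ if every vector of $M$ lies in a finite-dimensional $\bar{\mathfrak D}^+$-submodule. A Whittaker module is a module generated by a nonzero vector $v$ with $xv=\varphi(x)v$ for all $x\in\bar{\mathfrak D}^+$, for some Lie algebra homomorphism $\varphi:\bar{\mathfrak D}^+\to\mathbb C$; a highest weight module is a module generated by a nonzero vector $v$ with $\bar{\mathfrak D}^+v=0$ and $\bar{\mathfrak D}^0v\subseteq\mathbb Cv$.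 *)

theory Defs
  imports Complex_Main
begin

text \<open>A module over the Lie algebra Dbar is a complex vector space (additive group 'm with
  scalar multiplication smul) together with linear operators giving the action of the basis
  elements d_m, h_r, c1, c2, c3, such that commutators of operators realise the brackets.\<close>

definition Dbar_module ::
  "(complex \<Rightarrow> 'm::ab_group_add \<Rightarrow> 'm) \<Rightarrow> (int \<Rightarrow> 'm \<Rightarrow> 'm) \<Rightarrow> (int \<Rightarrow> 'm \<Rightarrow> 'm)
   \<Rightarrow> ('m \<Rightarrow> 'm) \<Rightarrow> ('m \<Rightarrow> 'm) \<Rightarrow> ('m \<Rightarrow> 'm) \<Rightarrow> bool" where
  "Dbar_module smul d h c1 c2 c3 \<longleftrightarrow>
     vector_space smul \<and>
     (\<forall>m. Vector_Spaces.linear smul smul (d m)) \<and>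
     (\<forall>r. Vector_Spaces.linear smul smul (h r)) \<and>
     Vector_Spaces.linear smul smul c1 \<and>
     Vector_Spaces.linear smul smul c2 \<and>
     Vector_Spaces.linear smul smul c3 \<and>
     (\<forall>m n v. d m (d n v) - d n (d m v) =
        smul (of_int (m - n)) (d (m + n) v) +
        (if m + n = 0 then smul (of_int (m ^ 3 - m) / 12) (c1 v) else 0)) \<and>
     (\<forall>m r v. d m (h r v) - h r (d m v) =
        smul (of_int (- r)) (h (m + r) v) +
        (if m + r = 0 then smul (of_int (m ^ 2 + m)) (c2 v) else 0)) \<and>
     (\<forall>r s v. h r (h s v) - h s (h r v) =
        (if r + s = 0 then smul (of_int r) (c3 v) else 0)) \<and>
     (\<forall>c \<in> {c1, c2, c3}.
        (\<forall>m v. c (d m v) = d m (c v)) \<and> (\<forall>r v. c (h r v) = h r (c v)) \<and>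
        (\<forall>c' \<in> {c1, c2, c3}. \<forall>v. c (c' v) = c' (c v)))"

definition Dbar_submodule ::
  "(complex \<Rightarrow> 'm::ab_group_add \<Rightarrow> 'm) \<Rightarrow> (int \<Rightarrow> 'm \<Rightarrow> 'm) \<Rightarrow> (int \<Rightarrow> 'm \<Rightarrow> 'm)
   \<Rightarrow> ('m \<Rightarrow> 'm) \<Rightarrow> ('m \<Rightarrow> 'm) \<Rightarrow> ('m \<Rightarrow> 'm) \<Rightarrow> 'm set \<Rightarrow> bool" where
  "Dbar_submodule smul d h c1 c2 c3 W \<longleftrightarrow>
     module.subspace smul W \<and>
     (\<forall>m. d m ` W \<subseteq> W) \<and> (\<forall>r. h r ` W \<subseteq> W) \<and>
     c1 ` W \<subseteq> W \<and> c2 ` W \<subseteq> W \<and> c3 ` W \<subseteq> W"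

definition Dbar_simple ::
  "(complex \<Rightarrow> 'm::ab_group_add \<Rightarrow> 'm) \<Rightarrow> (int \<Rightarrow> 'm \<Rightarrow> 'm) \<Rightarrow> (int \<Rightarrow> 'm \<Rightarrow> 'm)
   \<Rightarrow> ('m \<Rightarrow> 'm) \<Rightarrow> ('m \<Rightarrow> 'm) \<Rightarrow> ('m \<Rightarrow> 'm) \<Rightarrow> bool" where
  "Dbar_simple smul d h c1 c2 c3 \<longleftrightarrow>
     (\<exists>v::'m::ab_group_add. v \<noteq> 0) \<and>
     (\<forall>W. Dbar_submodule smul d h c1 c2 c3 W \<longrightarrow> W = {0} \<or> W = UNIV)"

definition Dbar_generated_by ::
  "(complex \<Rightarrow> 'm::ab_group_add \<Rightarrow> 'm) \<Rightarrow> (int \<Rightarrow> 'm \<Rightarrow> 'm) \<Rightarrow> (int \<Rightarrow> 'm \<Rightarrow> 'm)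
   \<Rightarrow> ('m \<Rightarrow> 'm) \<Rightarrow> ('m \<Rightarrow> 'm) \<Rightarrow> ('m \<Rightarrow> 'm) \<Rightarrow> 'm \<Rightarrow> bool" where
  "Dbar_generated_by smul d h c1 c2 c3 (v::'m::ab_group_add) \<longleftrightarrow>
     (\<forall>W. Dbar_submodule smul d h c1 c2 c3 W \<and> v \<in> W \<longrightarrow> W = UNIV)"

text \<open>Dbar^+ (spanned by d_n, h_n, n \<ge> 1) acts locally finitely: every vector lies in a
  finite-dimensional subspace stable under Dbar^+.\<close>
definition Dplus_locally_finite ::
  "(complex \<Rightarrow> 'm::ab_group_add \<Rightarrow> 'm) \<Rightarrow> (int \<Rightarrow> 'm \<Rightarrow> 'm) \<Rightarrow> (int \<Rightarrow> 'm \<Rightarrow> 'm) \<Rightarrow> bool" where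
  "Dplus_locally_finite smul d h \<longleftrightarrow>
     (\<forall>v. \<exists>W. v \<in> W \<and> module.subspace smul W \<and>
        (\<exists>B. finite B \<and> W = module.span smul B) \<and>
        (\<forall>n\<ge>1. d n ` W \<subseteq> W \<and> h n ` W \<subseteq> W))"

text \<open>A linear map phi : Dbar^+ \<rightarrow> C is determined by its values phid n = phi(d_n),
  phih n = phi(h_n), n \<ge> 1.  It is a Lie algebra homomorphism iff it kills all brackets of
  basis elements of Dbar^+, i.e. phi([d_m,d_n]) = (m-n) phi(d_(m+n)) = 0,
  phi([d_m,h_r]) = -r phi(h_(m+r)) = 0, phi([h_r,h_s]) = 0 for m,n,r,s \<ge> 1.\<close>
definition Dplus_Lie_hom :: "(int \<Rightarrow> complex) \<Rightarrow> (int \<Rightarrow> complex) \<Rightarrow> bool" where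
  "Dplus_Lie_hom phid phih \<longleftrightarrow>
     (\<forall>m\<ge>1. \<forall>n\<ge>1. of_int (m - n) * phid (m + n) = 0) \<and>
     (\<forall>m\<ge>1. \<forall>r\<ge>1. of_int (- r) * phih (m + r) = 0)"

definition Dbar_Whittaker_module ::
  "(complex \<Rightarrow> 'm::ab_group_add \<Rightarrow> 'm) \<Rightarrow> (int \<Rightarrow> 'm \<Rightarrow> 'm) \<Rightarrow> (int \<Rightarrow> 'm \<Rightarrow> 'm)
   \<Rightarrow> ('m \<Rightarrow> 'm) \<Rightarrow> ('m \<Rightarrow> 'm) \<Rightarrow> ('m \<Rightarrow> 'm) \<Rightarrow> bool" where
  "Dbar_Whittaker_module smul d h c1 c2 c3 \<longleftrightarrow>
     (\<exists>(v::'m::ab_group_add) phid phih. v \<noteq> 0 \<and> Dplus_Lie_hom phid phih \<and>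
        (\<forall>n\<ge>1. d n v = smul (phid n) v \<and> h n v = smul (phih n) v) \<and>
        Dbar_generated_by smul d h c1 c2 c3 v)"

definition Dbar_highest_weight_module ::
  "(complex \<Rightarrow> 'm::ab_group_add \<Rightarrow> 'm) \<Rightarrow> (int \<Rightarrow> 'm \<Rightarrow> 'm) \<Rightarrow> (int \<Rightarrow> 'm \<Rightarrow> 'm)
   \<Rightarrow> ('m \<Rightarrow> 'm) \<Rightarrow> ('m \<Rightarrow> 'm) \<Rightarrow> ('m \<Rightarrow> 'm) \<Rightarrow> bool" where
  "Dbar_highest_weight_module smul d h c1 c2 c3 \<longleftrightarrow>
     (\<exists>v::'m::ab_group_add. v \<noteq> 0 \<and>
        (\<forall>n\<ge>1. d n v = 0 \<and> h n v = 0) \<and>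
        d 0 v \<in> module.span smul {v} \<and> h 0 v \<in> module.span smul {v} \<and>
        c1 v \<in> module.span smul {v} \<and> c2 v \<in> module.span smul {v} \<and>
        c3 v \<in> module.span smul {v} \<and>
        Dbar_generated_by smul d h c1 c2 c3 v)"

end

(*
  Let W = span B be a finite-dimensional subspace containing a given nonzero vector and stable
  under all d_n, h_n with n >= 1.  Restricted to W these operators lie in a finite-dimensional
  space, so they satisfy a nontrivial linear relation.  Bracketing it with d_k (for the d_n: with
  its own shifts) gives relations with fixed coefficients for every shift, and bracketing those
  with d_1 shortens them; hence d_n and h_n vanish on W for all large n.  Then descend: on the
  subspace of W killed by all d_n, h_n with n > k, first h_k and then d_k commutes with everything
  and is a nonzero multiple of a commutator ([d_1, h_(k-1)] resp. [d_1, d_(k-1)]).  On an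
  eigenspace of such an operator that commutator acts as a scalar, and a commutator cannot be a
  nonzero scalar on a finite-dimensional space; so the operator has a nonzero kernel.  Stopping
  at k = 3 and killing h_2 as well, the remaining operators d_1, d_2, h_1 commute and so have a
  common eigenvector.  The eigenvalues of a common eigenvector of all d_n, h_n form a Lie algebra
  homomorphism, so in a simple module this vector generates a Whittaker module.
*)

theory Submission
  imports Defs "HOL-Library.Function_Algebras" "HOL-Computational_Algebra.Fundamental_Theorem_Algebra"
begin

lemma sum_fun_apply: "(sum f A) x = (\<Sum>i\<in>A. f i x)"
  by (induction A rule: infinite_finite_induct) auto

locale complex_vector_space = vector_space smul for smul :: "complex \<Rightarrow> 'm::ab_group_add \<Rightarrow> 'm"
begin

sublocale vector_space_pair smul smul ..

abbreviation linear_op :: "('m \<Rightarrow> 'm) \<Rightarrow> bool" where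
  "linear_op \<equiv> Vector_Spaces.linear smul smul"

lemma sequence_in_finite_span_relation:
  fixes f :: "nat \<Rightarrow> 'm"
  assumes G: "finite G" and f: "\<And>i. f i \<in> span G"
  shows "\<exists>m a. a m \<noteq> 0 \<and> (\<Sum>i\<le>m. smul (a i) (f i)) = 0"
proof -
  define P where "P n \<longleftrightarrow> f n \<in> span (f ` {..<n})" for n
  have "\<exists>n. P n"
  proof (rule ccontr)
    assume "\<nexists>n. P n"
    then have "independent (f ` {..<n}) \<and> card (f ` {..<n}) = n" for n
    proof (induction n)
      case (Suc n)
      then have "f n \<notin> span (f ` {..<n})" by (auto simp: P_def)
      with Suc show ?case
        by (auto simp: lessThan_Suc independent_insertI card_insert_if span_base)
    qed (simp add: independent_empty)
    then show False
      using independent_span_bound[OF G, of "f ` {..<Suc (card G)}"] f by fastforce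
  qed
  then obtain n where n: "P n" and min: "\<And>i. i < n \<Longrightarrow> \<not> P i"
    using exists_least_iff[of P] by auto
  have inj: "inj_on f {..<n}"
  proof (rule inj_onI)
    fix i j assume "i \<in> {..<n}" "j \<in> {..<n}" "f i = f j"
    then show "i = j"
      using min[of i] min[of j] span_base[of _ "f ` {..<_}"]
      by (metis image_eqI lessThan_iff linorder_neqE_nat order.strict_trans P_def)
  qed
  obtain u where u: "(\<Sum>x\<in>f ` {..<n}. smul (u x) x) = f n"
    using n span_finite[of "f ` {..<n}"] by (auto simp: P_def)
  define a where "a i = (if i = n then -1 else u (f i))" for i
  have "(\<Sum>i\<le>n. smul (a i) (f i)) = (\<Sum>i<n. smul (u (f i)) (f i)) - f n"
    by (simp add: a_def lessThan_Suc_atMost[symmetric])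
  also have "\<dots> = 0"
    using u sum.reindex[OF inj, of "\<lambda>x. smul (u x) x"] by simp
  finally show ?thesis by (intro exI[of _ n] exI[of _ a]) (simp add: a_def)
qed

definition poly_apply :: "('m \<Rightarrow> 'm) \<Rightarrow> complex poly \<Rightarrow> 'm \<Rightarrow> 'm" where
  "poly_apply T p u = (\<Sum>i\<le>degree p. smul (coeff p i) ((T ^^ i) u))"

lemma poly_apply_atMost:
  "degree p \<le> K \<Longrightarrow> poly_apply T p u = (\<Sum>i\<le>K. smul (coeff p i) ((T ^^ i) u))"
  unfolding poly_apply_def by (rule sum.mono_neutral_left) (auto simp: coeff_eq_0)

lemma poly_apply_linear_factor:
  assumes T: "linear_op T"
  shows "poly_apply T ([:-r, 1:] * q) u = T (poly_apply T q u) - smul r (poly_apply T q u)"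
proof -
  let ?K = "Suc (degree q)"
  let ?S = "\<lambda>p. \<Sum>i\<le>?K. smul (coeff p i) ((T ^^ i) u)"
  have "poly_apply T ([:-r, 1:] * q) u = ?S (smult (-r) q + pCons 0 q)"
    using degree_mult_le[of "[:-r, 1:]" q]
    by (simp add: poly_apply_atMost mult_pCons_left del: sum.atMost_Suc)
  also have "\<dots> = - smul r (?S q) + ?S (pCons 0 q)"
    by (simp add: scale_left_diff_distrib sum_subtractf scale_sum_right sum_negf del: sum.atMost_Suc)
  also have "?S q = poly_apply T q u"
    by (rule poly_apply_atMost[symmetric]) simp
  also have "?S (pCons 0 q) = T (poly_apply T q u)"
    by (simp add: sum.atMost_Suc_shift poly_apply_def linear_sum[OF T] linear_scale[OF T]
        del: sum.atMost_Suc)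
  finally show ?thesis by simp
qed

lemma funpow_in_invariant: "T ` S \<subseteq> S \<Longrightarrow> u \<in> S \<Longrightarrow> (T ^^ i) u \<in> S"
  by (induction i) auto

lemma poly_apply_in_subspace:
  "subspace S \<Longrightarrow> T ` S \<subseteq> S \<Longrightarrow> u \<in> S \<Longrightarrow> poly_apply T p u \<in> S"
  unfolding poly_apply_def by (intro subspace_sum subspace_scale funpow_in_invariant) auto

lemma exists_annihilating_poly:
  assumes B: "finite B" and orbit: "\<And>i. (T ^^ i) u \<in> span B"
  shows "\<exists>p. p \<noteq> 0 \<and> poly_apply T p u = 0"
proof -
  obtain m a where a: "a m \<noteq> 0" "(\<Sum>i\<le>m. smul (a i) ((T ^^ i) u)) = 0"
    using sequence_in_finite_span_relation[OF B, of "\<lambda>i. (T ^^ i) u"] orbit by blast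
  define p where "p = (\<Sum>i\<le>m. monom (a i) i)"
  have coeff_p: "coeff p i = (if i \<le> m then a i else 0)" for i
    by (simp add: p_def coeff_sum coeff_monom)
  have "degree p \<le> m" by (rule degree_le) (simp add: coeff_p)
  then have "poly_apply T p u = 0"
    using a(2) by (simp add: poly_apply_atMost coeff_p)
  moreover have "p \<noteq> 0" using a(1) coeff_p by (metis coeff_0 order_refl)
  ultimately show ?thesis by blast
qed

lemma exists_eigenvector:
  assumes B: "finite B" and S: "subspace S" "S \<subseteq> span B" and u: "u \<in> S" "u \<noteq> 0"
    and T: "linear_op T" "T ` S \<subseteq> S"
  shows "\<exists>w\<in>S. w \<noteq> 0 \<and> (\<exists>r. T w = smul r w)"
proof -
  have "(T ^^ i) u \<in> span B" for i
    using funpow_in_invariant[OF T(2) u(1)] S(2) by blast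
  then have "\<exists>p. p \<noteq> 0 \<and> poly_apply T p u = 0"
    by (rule exists_annihilating_poly[OF B])
  then obtain p where p: "p \<noteq> 0" "poly_apply T p u = 0"
    and min: "\<And>q. q \<noteq> 0 \<Longrightarrow> poly_apply T q u = 0 \<Longrightarrow> degree p \<le> degree q"
    using ex_has_least_nat[of "\<lambda>p. p \<noteq> 0 \<and> poly_apply T p u = 0" _ degree] by blast
  have "degree p \<noteq> 0"
  proof
    assume "degree p = 0"
    then have "poly_apply T p u = smul (coeff p 0) u" and "coeff p 0 \<noteq> 0"
      using leading_coeff_neq_0[OF p(1)] by (simp_all add: poly_apply_def)
    then show False using p(2) u(2) by simp
  qed
  then obtain r where "poly p r = 0"
    using fundamental_theorem_of_algebra[of p] constant_degree[of p] by metis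
  then obtain q where q: "p = [:-r, 1:] * q"
    using poly_eq_0_iff_dvd by (metis dvdE)
  have "q \<noteq> 0" using p(1) q by auto
  then have "degree p = Suc (degree q)" unfolding q by (subst degree_mult_eq) auto
  with \<open>q \<noteq> 0\<close> have "poly_apply T q u \<noteq> 0" using min by fastforce
  moreover have "T (poly_apply T q u) = smul r (poly_apply T q u)"
    using poly_apply_linear_factor[OF T(1), of r q u] q p(2) by simp
  ultimately show ?thesis
    using poly_apply_in_subspace[OF S(1) T(2) u(1)] by blast
qed

lemma commutator_lowers_eigenvector_orbit:
  assumes X: "linear_op X" "X ` E \<subseteq> E" and "w \<in> E" "Y w = smul b w"
    and comm: "\<And>x. x \<in> E \<Longrightarrow> X (Y x) - Y (X x) = smul c x"
  shows "Y ((X ^^ Suc k) w) - smul b ((X ^^ Suc k) w) = smul (- of_nat (Suc k) * c) ((X ^^ k) w)"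
proof (induction k)
  case 0
  show ?case
    using comm[OF \<open>w \<in> E\<close>] \<open>Y w = smul b w\<close> by (simp add: linear_scale[OF X(1)]) (metis minus_diff_eq)
next
  case (Suc k)
  let ?x = "(X ^^ Suc k) w"
  have "?x \<in> E" using funpow_in_invariant[OF X(2) \<open>w \<in> E\<close>] .
  then have "Y (X ?x) - smul b (X ?x) = X (Y ?x - smul b ?x) - smul c ?x"
    using comm[of ?x] by (simp add: linear_diff[OF X(1)] linear_scale[OF X(1)] algebra_simps)
  also have "\<dots> = smul (- of_nat (Suc (Suc k)) * c) ?x"
    unfolding Suc by (simp add: linear_scale[OF X(1)] flip: scale_left_diff_distrib)
      (simp add: algebra_simps)
  finally show ?case by simp
qed

(* For an eigenvector w of Y with eigenvalue b, Y - b maps X^(i+1) w to a multiple of X^i w,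
   so applied to a shortest relation among the X^i w it produces a shorter one. *)
lemma commutator_scalar_eq_0:
  assumes B: "finite B" and E: "subspace E" "E \<subseteq> span B" and u: "u \<in> E" "u \<noteq> 0"
    and X: "linear_op X" "X ` E \<subseteq> E" and Y: "linear_op Y" "Y ` E \<subseteq> E"
    and comm: "\<And>x. x \<in> E \<Longrightarrow> X (Y x) - Y (X x) = smul c x"
  shows "c = 0"
proof (rule ccontr)
  assume "c \<noteq> 0"
  obtain w b where w: "w \<in> E" "w \<noteq> 0" "Y w = smul b w"
    using exists_eigenvector[OF B E u Y] by blast
  define wk where "wk i = (X ^^ i) w" for i
  define Y' where "Y' x = Y x - smul b x" for x
  have Y': "linear_op Y'"
    unfolding Y'_def by (intro linear_compose_sub Y(1) linear_compose_scale_right module_hom_ident)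
  define R where "R m \<longleftrightarrow> (\<exists>a. a m \<noteq> 0 \<and> (\<Sum>i\<le>m. smul (a i) (wk i)) = 0)" for m
  have "wk i \<in> span B" for i
    unfolding wk_def using funpow_in_invariant[OF X(2) w(1)] E(2) by blast
  then have "\<exists>m. R m"
    unfolding R_def by (rule sequence_in_finite_span_relation[OF B])
  then obtain m where "R m" and min: "\<And>m'. R m' \<Longrightarrow> m \<le> m'"
    using ex_has_least_nat[of R _ id] by auto
  then obtain a where a: "a m \<noteq> 0" "(\<Sum>i\<le>m. smul (a i) (wk i)) = 0" unfolding R_def by blast
  show False
  proof (cases m)
    case 0
    then show False using a w(2) by (simp add: wk_def)
  next
    case (Suc m')
    define a' where "a' i = a (Suc i) * (- of_nat (Suc i) * c)" for i
    have "0 = Y' (\<Sum>i\<le>m. smul (a i) (wk i))"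
      using a(2) linear_0[OF Y'] by simp
    also have "\<dots> = (\<Sum>i\<le>m'. smul (a (Suc i)) (Y' (wk (Suc i))))"
      unfolding Suc linear_sum[OF Y'] linear_scale[OF Y']
      by (subst sum.atMost_Suc_shift) (simp add: Y'_def wk_def w(3))
    also have "\<dots> = (\<Sum>i\<le>m'. smul (a' i) (wk i))"
      using commutator_lowers_eigenvector_orbit[OF X w(1,3) comm] by (simp add: Y'_def wk_def a'_def)
    finally have "R m'"
      unfolding R_def using a(1) \<open>c \<noteq> 0\<close> Suc
      by (intro exI[of _ a']) (simp add: a'_def del: of_nat_Suc)
    then show False using min Suc by fastforce
  qed
qed

lemma eigenspace_subspace: "subspace S \<Longrightarrow> linear_op T \<Longrightarrow> subspace {x\<in>S. T x = smul r x}"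
  using subspace_inter[of S "{x. T x - smul r x = 0}"]
    linear_subspace_kernel[of "\<lambda>x. T x - smul r x"]
    linear_compose_sub[OF _ linear_compose_scale_right[OF module_hom_ident]]
  by (simp add: Int_def conj_commute)

lemma eigenspace_invariant:
  assumes "Y ` S \<subseteq> S" "linear_op Y" "\<And>x. x \<in> S \<Longrightarrow> T (Y x) = Y (T x)"
  shows "Y ` {x\<in>S. T x = smul r x} \<subseteq> {x\<in>S. T x = smul r x}"
  using assms by (auto simp: linear_scale)

lemma central_commutator_has_kernel:
  assumes B: "finite B" and S: "subspace S" "S \<subseteq> span B" and u: "u \<in> S" "u \<noteq> 0"
    and Z: "linear_op Z" "Z ` S \<subseteq> S"
    and X: "linear_op X" "X ` S \<subseteq> S"
    and Y: "linear_op Y" "Y ` S \<subseteq> S"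
    and ZX: "\<And>x. x \<in> S \<Longrightarrow> Z (X x) = X (Z x)"
    and ZY: "\<And>x. x \<in> S \<Longrightarrow> Z (Y x) = Y (Z x)"
    and XY: "\<And>x. x \<in> S \<Longrightarrow> X (Y x) - Y (X x) = smul k (Z x)" and "k \<noteq> 0"
  shows "\<exists>w\<in>S. w \<noteq> 0 \<and> Z w = 0"
proof -
  obtain w r where w: "w \<in> S" "w \<noteq> 0" "Z w = smul r w"
    using exists_eigenvector[OF B S u Z] by blast
  let ?E = "{x\<in>S. Z x = smul r x}"
  have "k * r = 0"
  proof (rule commutator_scalar_eq_0[OF B eigenspace_subspace[OF S(1) Z(1)] _ _ _ X(1) _ Y(1)])
    show "?E \<subseteq> span B" "w \<in> ?E" "w \<noteq> 0" using S(2) w by auto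
    show "X ` ?E \<subseteq> ?E" using eigenspace_invariant[OF X(2,1)] ZX by blast
    show "Y ` ?E \<subseteq> ?E" using eigenspace_invariant[OF Y(2,1)] ZY by blast
  qed (use XY in simp)
  then show ?thesis using w \<open>k \<noteq> 0\<close> by auto
qed

lemma common_eigenvector:
  assumes B: "finite B" and S: "subspace S" "S \<subseteq> span B" and u: "u \<in> S" "u \<noteq> 0"
    and lin: "\<And>T. T \<in> set Ts \<Longrightarrow> linear_op T \<and> T ` S \<subseteq> S"
    and comm: "\<And>T T' x. T \<in> set Ts \<Longrightarrow> T' \<in> set Ts \<Longrightarrow> x \<in> S \<Longrightarrow> T (T' x) = T' (T x)"
  shows "\<exists>w\<in>S. w \<noteq> 0 \<and> (\<forall>T\<in>set Ts. \<exists>r. T w = smul r w)"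
  using S u lin comm
proof (induction Ts arbitrary: S u)
  case Nil
  then show ?case by auto
next
  case (Cons T Ts)
  obtain w r where w: "w \<in> S" "w \<noteq> 0" "T w = smul r w"
    using exists_eigenvector[OF B Cons.prems(1-4)] Cons.prems(5) by force
  let ?E = "{x\<in>S. T x = smul r x}"
  have "\<exists>v\<in>?E. v \<noteq> 0 \<and> (\<forall>T'\<in>set Ts. \<exists>r. T' v = smul r v)"
  proof (rule Cons.IH)
    show "subspace ?E" using eigenspace_subspace Cons.prems(1,5) by simp
    show "?E \<subseteq> span B" "w \<in> ?E" "w \<noteq> 0" using Cons.prems(2) w by auto
    show "linear_op T' \<and> T' ` ?E \<subseteq> ?E" if "T' \<in> set Ts" for T'
      using that eigenspace_invariant[of T' S T r] Cons.prems(5,6) by auto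
  qed (use Cons.prems(6) in auto)
  then show ?case using w by auto
qed

(* Bracketing the relation at shift i with D and subtracting g - i times the relation at shift
   i + 1 multiplies the coefficient of X (n + i + 1) by n, so the constant term drops out. *)
lemma shifted_relation_shorten:
  fixes X :: "int \<Rightarrow> 'm \<Rightarrow> 'm" and c :: "nat \<Rightarrow> complex"
  assumes D: "linear_op D" "D ` W \<subseteq> W"
    and comm: "\<And>k w. k \<ge> 1 \<Longrightarrow> w \<in> W \<Longrightarrow> D (X k w) - X k (D w) = smul (of_int (g - k)) (X (k + 1) w)"
    and rel: "\<And>j w. j \<ge> jz \<Longrightarrow> w \<in> W \<Longrightarrow> (\<Sum>n\<le>Suc L. smul (c n) (X (int n + j) w)) = 0"
    and "jz \<ge> 1" and j: "j \<ge> jz + 2" and "w \<in> W"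
  shows "(\<Sum>n\<le>L. smul (c (Suc n) * of_nat (Suc n)) (X (int n + j) w)) = 0"
proof -
  define i where "i = j - 2"
  have "i \<ge> jz" using j by (simp add: i_def)
  define S where "S f = (\<Sum>n\<le>Suc L. smul (f n) (X (int n + i + 1) w))" for f
  have "0 = D (\<Sum>n\<le>Suc L. smul (c n) (X (int n + i) w)) - (\<Sum>n\<le>Suc L. smul (c n) (X (int n + i) (D w)))"
    using rel[OF \<open>i \<ge> jz\<close> \<open>w \<in> W\<close>] rel[OF \<open>i \<ge> jz\<close>, of "D w"] D \<open>w \<in> W\<close>
    by (simp add: image_subset_iff linear_0 del: sum.atMost_Suc)
  also have "\<dots> = (\<Sum>n\<le>Suc L. smul (c n) (D (X (int n + i) w) - X (int n + i) (D w)))"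
    by (simp del: sum.atMost_Suc add: linear_sum[OF D(1)] linear_scale[OF D(1)] sum_subtractf
        scale_right_diff_distrib)
  also have "\<dots> = S (\<lambda>n. c n * of_int (g - (int n + i)))"
    unfolding S_def using \<open>i \<ge> jz\<close> \<open>jz \<ge> 1\<close> \<open>w \<in> W\<close>
    by (intro sum.cong refl) (simp add: comm)
  finally have S1: "S (\<lambda>n. c n * of_int (g - (int n + i))) = 0" ..
  have S2: "S c = 0"
    using rel[of "i + 1" w] \<open>i \<ge> jz\<close> \<open>w \<in> W\<close> by (simp add: S_def add.assoc)
  have "S (\<lambda>n. c n * of_nat n) = smul (of_int (g - i)) (S c) - S (\<lambda>n. c n * of_int (g - (int n + i)))"
    unfolding S_def scale_sum_right sum_subtractf[symmetric]
    by (intro sum.cong refl) (simp add: algebra_simps flip: scale_left_diff_distrib)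
  also have "\<dots> = 0" by (simp only: S1 S2 scale_zero_right diff_zero)
  finally show ?thesis
    by (simp add: S_def sum.atMost_Suc_shift i_def algebra_simps del: sum.atMost_Suc)
qed

lemma shifted_relations_imp_eventually_zero:
  fixes X :: "int \<Rightarrow> 'm \<Rightarrow> 'm" and c :: "nat \<Rightarrow> complex"
  assumes D: "linear_op D" "D ` W \<subseteq> W"
    and comm: "\<And>k w. k \<ge> 1 \<Longrightarrow> w \<in> W \<Longrightarrow> D (X k w) - X k (D w) = smul (of_int (g - k)) (X (k + 1) w)"
    and rel: "\<And>j w. j \<ge> jz \<Longrightarrow> w \<in> W \<Longrightarrow> (\<Sum>n\<le>L. smul (c n) (X (int n + j) w)) = 0"
    and "jz \<ge> 1" "c L \<noteq> 0"
  shows "\<exists>N. \<forall>k\<ge>N. \<forall>w\<in>W. X k w = 0"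
  using rel \<open>jz \<ge> 1\<close> \<open>c L \<noteq> 0\<close>
proof (induction L arbitrary: c jz)
  case 0
  then show ?case by (intro exI[of _ jz]) force
next
  case (Suc L)
  have "c (Suc L) * of_nat (Suc L) \<noteq> 0" using Suc.prems(3) by (simp del: of_nat_Suc)
  moreover have "(\<Sum>n\<le>L. smul (c (Suc n) * of_nat (Suc n)) (X (int n + j) w)) = 0"
    if "j \<ge> jz + 2" "w \<in> W" for j w
    using shifted_relation_shorten[where X = X and c = c, OF D comm Suc.prems(1)] Suc.prems(2) that
    by blast
  ultimately show ?case
    using Suc.IH[of "jz + 2" "\<lambda>n. c (Suc n) * of_nat (Suc n)"] Suc.prems(2) by simp
qed

lemma operator_sequence_relation:
  fixes F :: "nat \<Rightarrow> 'm \<Rightarrow> 'm"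
  assumes B: "finite B" and F: "\<And>i. linear_op (F i)" "\<And>i b. b \<in> B \<Longrightarrow> F i b \<in> span B"
  shows "\<exists>m a. a m \<noteq> 0 \<and> (\<forall>w\<in>span B. (\<Sum>i\<le>m. smul (a i) (F i w)) = 0)"
proof -
  \<comment> \<open>The restrictions of the F i to B lie in the space of functions supported on B with
    values in span B, which is spanned by the finitely many delta b y with b, y in B.\<close>
  define fs :: "complex \<Rightarrow> ('m \<Rightarrow> 'm) \<Rightarrow> 'm \<Rightarrow> 'm" where "fs c f x = smul c (f x)" for c f x
  interpret fun_space: complex_vector_space fs
    by unfold_locales (auto simp: fs_def fun_eq_iff scale_right_distrib scale_left_distrib)
  define delta :: "'m \<Rightarrow> 'm \<Rightarrow> 'm \<Rightarrow> 'm" where "delta b y x = (if x = b then y else 0)" for b y x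
  define G where "G = (\<lambda>(b, y). delta b y) ` (B \<times> B)"
  have delta_span: "delta b ` span B \<subseteq> fun_space.span G" if "b \<in> B" for b
  proof -
    have "module_hom smul fs (delta b)"
      by unfold_locales (auto simp: delta_def fs_def fun_eq_iff)
    then have "delta b ` span B \<subseteq> fun_space.span (delta b ` B)"
      by (rule module_hom.spans_image) simp
    also have "\<dots> \<subseteq> fun_space.span G"
      using that by (intro fun_space.span_mono) (auto simp: G_def)
    finally show ?thesis .
  qed
  define Fi where "Fi i = (\<Sum>b\<in>B. delta b (F i b))" for i
  have "Fi i \<in> fun_space.span G" for i
    unfolding Fi_def using delta_span F(2) by (intro fun_space.span_sum) blast
  then obtain m a where a: "a m \<noteq> 0" "(\<Sum>i\<le>m. fs (a i) (Fi i)) = 0"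
    using fun_space.sequence_in_finite_span_relation[of G Fi] B by (auto simp: G_def)
  have "(\<Sum>i\<le>m. smul (a i) (F i b)) = 0" if "b \<in> B" for b
    using fun_cong[OF a(2), of b] that B by (simp add: sum_fun_apply fs_def Fi_def delta_def)
  moreover have "linear_op (\<lambda>w. \<Sum>i\<le>m. smul (a i) (F i w))"
    using F(1) by (intro linear_compose_sum ballI linear_compose_scale_right)
  ultimately have "(\<Sum>i\<le>m. smul (a i) (F i w)) = 0" if "w \<in> span B" for w
    using linear_eq_0_on_span that by blast
  with a(1) show ?thesis by blast
qed

lemma relation_commutator:
  assumes D: "linear_op D" "D ` W \<subseteq> W"
    and rel: "\<And>w. w \<in> W \<Longrightarrow> (\<Sum>i\<le>m. smul (a i) (X i w)) = 0" and "w \<in> W"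
  shows "(\<Sum>i\<le>m. smul (a i) (D (X i w) - X i (D w))) = 0"
proof -
  have "D w \<in> W" using D(2) \<open>w \<in> W\<close> by blast
  then have "D (\<Sum>i\<le>m. smul (a i) (X i w)) - (\<Sum>i\<le>m. smul (a i) (X i (D w))) = 0"
    using rel \<open>w \<in> W\<close> by (simp add: linear_0[OF D(1)])
  then show ?thesis
    by (simp add: linear_sum[OF D(1)] linear_scale[OF D(1)] sum_subtractf scale_right_diff_distrib)
qed

lemma sum_antisymmetric_eq_0:
  fixes f :: "'i::ab_semigroup_add \<Rightarrow> 'i \<Rightarrow> complex" and Z :: "'i \<Rightarrow> 'm"
  assumes "\<And>n n'. f n' n = - f n n'"
  shows "(\<Sum>n\<in>A. \<Sum>n'\<in>A. smul (f n n') (Z (n + n'))) = 0"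
proof -
  let ?S = "\<Sum>n\<in>A. \<Sum>n'\<in>A. smul (f n n') (Z (n + n'))"
  have "?S = (\<Sum>n'\<in>A. \<Sum>n\<in>A. smul (f n n') (Z (n + n')))" by (rule sum.swap)
  also have "\<dots> = (\<Sum>n'\<in>A. \<Sum>n\<in>A. - smul (f n' n) (Z (n' + n)))"
    by (intro sum.cong refl) (metis assms add.commute scale_minus_left)
  also have "\<dots> = - ?S" by (simp add: sum_negf)
  finally have "?S + ?S = 0" by (simp add: eq_neg_iff_add_eq_0)
  then have "smul (1 + 1) ?S = 0" by (simp only: scale_left_distrib scale_one)
  then show ?thesis by simp
qed

lemma double_sum_by_total_index:
  fixes a :: "nat \<Rightarrow> complex" and Z :: "nat \<Rightarrow> 'm" and m :: nat
  defines "e \<equiv> \<lambda>t. \<Sum>p\<in>{p\<in>{..m}\<times>{..m}. fst p + snd p = t}. a (fst p) * a (snd p)"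
  shows "(\<Sum>n\<le>m. \<Sum>n'\<le>m. smul (a n * a n') (Z (n + n'))) = (\<Sum>t\<le>2*m. smul (e t) (Z t))"
    and "e (2*m) = a m * a m"
proof -
  let ?h = "\<lambda>p::nat\<times>nat. fst p + snd p"
  have img: "?h ` ({..m}\<times>{..m}) = {..2*m}"
  proof
    show "{..2*m} \<subseteq> ?h ` ({..m}\<times>{..m})"
    proof
      fix t assume "t \<in> {..2*m}"
      then show "t \<in> ?h ` ({..m}\<times>{..m})"
        by (intro image_eqI[of _ _ "(min t m, t - min t m)"]) auto
    qed
  qed auto
  have "(\<Sum>n\<le>m. \<Sum>n'\<le>m. smul (a n * a n') (Z (n + n')))
      = (\<Sum>p\<in>{..m}\<times>{..m}. smul (a (fst p) * a (snd p)) (Z (?h p)))"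
    by (simp add: sum.cartesian_product split_def)
  also have "\<dots> = (\<Sum>t\<in>?h ` ({..m}\<times>{..m}). \<Sum>p\<in>{p\<in>{..m}\<times>{..m}. ?h p = t}.
      smul (a (fst p) * a (snd p)) (Z (?h p)))"
    by (rule sum.image_gen) simp
  also have "\<dots> = (\<Sum>t\<le>2*m. smul (e t) (Z t))"
    unfolding img e_def by (intro sum.cong refl) (simp add: scale_sum_left)
  finally show "(\<Sum>n\<le>m. \<Sum>n'\<le>m. smul (a n * a n') (Z (n + n'))) = (\<Sum>t\<le>2*m. smul (e t) (Z t))" .
  have "{p\<in>{..m}\<times>{..m}. ?h p = 2*m} = {(m, m)}" by auto
  then show "e (2*m) = a m * a m" by (simp add: e_def)
qed

end

locale Dplus_module = complex_vector_space smul for smul :: "complex \<Rightarrow> 'm::ab_group_add \<Rightarrow> 'm" +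
  fixes d h :: "int \<Rightarrow> 'm \<Rightarrow> 'm"
  assumes linear_d: "\<And>n. linear_op (d n)"
    and linear_h: "\<And>n. linear_op (h n)"
    and comm_dd: "\<And>m n v. m \<ge> 1 \<Longrightarrow> n \<ge> 1 \<Longrightarrow>
      d m (d n v) - d n (d m v) = smul (of_int (m - n)) (d (m + n) v)"
    and comm_dh: "\<And>m r v. m \<ge> 1 \<Longrightarrow> r \<ge> 1 \<Longrightarrow>
      d m (h r v) - h r (d m v) = smul (of_int (- r)) (h (m + r) v)"
    and comm_hh: "\<And>r s v. r \<ge> 1 \<Longrightarrow> s \<ge> 1 \<Longrightarrow> h r (h s v) = h s (h r v)"
begin

lemma common_eigenvector_Lie_hom:
  assumes "v \<noteq> 0" and eig: "\<And>n. n \<ge> 1 \<Longrightarrow> d n v = smul (phid n) v \<and> h n v = smul (phih n) v"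
  shows "Dplus_Lie_hom phid phih"
  unfolding Dplus_Lie_hom_def
proof (intro conjI allI impI)
  fix m n :: int assume "m \<ge> 1" "n \<ge> 1"
  then have "smul (of_int (m - n) * phid (m + n)) v = 0"
    using comm_dd[of m n v] eig[of m] eig[of n] eig[of "m + n"]
    by (simp add: linear_scale[OF linear_d] mult.commute)
  then show "of_int (m - n) * phid (m + n) = 0" using \<open>v \<noteq> 0\<close> by simp
next
  fix m r :: int assume "m \<ge> 1" "r \<ge> 1"
  then have "smul (of_int (- r) * phih (m + r)) v = 0"
    using comm_dh[of m r v] eig[of m] eig[of r] eig[of "m + r"]
    by (simp add: linear_scale[OF linear_d] linear_scale[OF linear_h] mult.commute)
  then show "of_int (- r) * phih (m + r) = 0" using \<open>v \<noteq> 0\<close> by simp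
qed

end


locale Dplus_invariant_span = Dplus_module smul d h
  for smul :: "complex \<Rightarrow> 'm::ab_group_add \<Rightarrow> 'm" and d h :: "int \<Rightarrow> 'm \<Rightarrow> 'm" +
  fixes B :: "'m set"
  assumes finite_B: "finite B"
    and d_span: "\<And>n w. n \<ge> 1 \<Longrightarrow> w \<in> span B \<Longrightarrow> d n w \<in> span B"
    and h_span: "\<And>n w. n \<ge> 1 \<Longrightarrow> w \<in> span B \<Longrightarrow> h n w \<in> span B"
begin

lemma d_span_image: "n \<ge> 1 \<Longrightarrow> d n ` span B \<subseteq> span B"
  using d_span by blast

(* Bracket the relation with its own shift by j - 2 > 0: the part antisymmetric in n, n'
   cancels, leaving j - 2 times a relation whose coefficients are the self-convolution of a. *)
lemma d_relation_squared:
  assumes rel: "\<And>w. w \<in> span B \<Longrightarrow> (\<Sum>i\<le>m. smul (a i) (d (int i + 1) w)) = 0"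
    and "j \<ge> 3" "w \<in> span B"
  shows "(\<Sum>n\<le>m. \<Sum>n'\<le>m. smul (a n * a n') (d (int (n + n') + j) w)) = 0"
proof -
  define k where "k = j - 2"
  have "k \<ge> 1" using \<open>j \<ge> 3\<close> by (simp add: k_def)
  let ?Z = "\<lambda>t. d (int t + 2 + k) w"
  define P where "P x = (\<Sum>n\<le>m. smul (a n) (d (int n + 1 + k) x))" for x
  have P: "linear_op P"
    unfolding P_def by (intro linear_compose_sum ballI linear_compose_scale_right linear_d)
  have "P ` span B \<subseteq> span B"
    unfolding P_def using \<open>k \<ge> 1\<close> by (auto intro!: span_sum span_scale d_span)
  have bracket: "d (int n + 1 + k) (d (int n' + 1) w) - d (int n' + 1) (d (int n + 1 + k) w)
      = smul (of_nat n - of_nat n' + of_int k) (?Z (n + n'))" for n n'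
  proof -
    have index: "int n + 1 + k + (int n' + 1) = int (n + n') + 2 + k"
      and coeff: "of_int (int n + 1 + k - (int n' + 1)) = (of_nat n - of_nat n' + of_int k :: complex)"
      by simp_all
    show ?thesis
      using comm_dd[of "int n + 1 + k" "int n' + 1" w] \<open>k \<ge> 1\<close> unfolding index coeff by simp
  qed
  from \<open>P ` span B \<subseteq> span B\<close>
  have "0 = (\<Sum>n'\<le>m. smul (a n') (P (d (int n' + 1) w) - d (int n' + 1) (P w)))"
    using relation_commutator[OF P _ rel \<open>w \<in> span B\<close>] by simp
  also have "\<dots> = (\<Sum>n\<le>m. \<Sum>n'\<le>m. smul (a n * a n')
      (d (int n + 1 + k) (d (int n' + 1) w) - d (int n' + 1) (d (int n + 1 + k) w)))"
    by (subst sum.swap) (simp add: P_def linear_sum[OF linear_d] linear_scale[OF linear_d]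
        scale_sum_right sum_subtractf scale_right_diff_distrib mult.commute)
  also have "\<dots> = (\<Sum>n\<le>m. \<Sum>n'\<le>m.
      smul (a n * a n') (smul (of_nat n - of_nat n' + of_int k) (?Z (n + n'))))"
    by (simp only: bracket flip: scale_right_diff_distrib)
  also have "\<dots> = (\<Sum>n\<le>m. \<Sum>n'\<le>m. smul (a n * a n' * (of_nat n - of_nat n')) (?Z (n + n')))
      + smul (of_int k) (\<Sum>n\<le>m. \<Sum>n'\<le>m. smul (a n * a n') (?Z (n + n')))"
    unfolding scale_sum_right scale_scale sum.distrib[symmetric] scale_left_distrib[symmetric]
    by (intro sum.cong refl) (simp add: algebra_simps)
  also have "(\<Sum>n\<le>m. \<Sum>n'\<le>m. smul (a n * a n' * (of_nat n - of_nat n')) (?Z (n + n'))) = 0"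
    by (rule sum_antisymmetric_eq_0) (simp add: algebra_simps)
  finally show ?thesis using \<open>k \<ge> 1\<close> by (simp add: k_def ac_simps)
qed

lemma d_eventually_zero: "\<exists>N. \<forall>k\<ge>N. \<forall>w\<in>span B. d k w = 0"
proof -
  obtain m a where "a m \<noteq> 0" and rel: "\<And>w. w \<in> span B \<Longrightarrow> (\<Sum>i\<le>m. smul (a i) (d (int i + 1) w)) = 0"
    using operator_sequence_relation[OF finite_B linear_d, of "\<lambda>i. int i + 1"]
    by (auto simp: d_span span_base)
  define e where "e t = (\<Sum>p\<in>{p\<in>{..m}\<times>{..m}. fst p + snd p = t}. a (fst p) * a (snd p))" for t
  have "(\<Sum>t\<le>2*m. smul (e t) (d (int t + j) w)) = 0" if "j \<ge> 3" "w \<in> span B" for j w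
    using d_relation_squared[OF rel that] double_sum_by_total_index(1)[of a "\<lambda>t. d (int t + j) w" m]
    unfolding e_def by simp
  moreover have "e (2*m) \<noteq> 0"
    using double_sum_by_total_index(2)[of a m] \<open>a m \<noteq> 0\<close> by (simp add: e_def)
  moreover have "d 1 (d k w) - d k (d 1 w) = smul (of_int (1 - k)) (d (k + 1) w)" if "k \<ge> 1" for k w
    using comm_dd[of 1 k w] that by (simp add: add.commute)
  ultimately show ?thesis
    using shifted_relations_imp_eventually_zero[where X = d and g = 1 and jz = 3 and L = "2*m" and c = e,
        OF linear_d d_span_image[OF order_refl]] by simp
qed

lemma h_eventually_zero: "\<exists>N. \<forall>k\<ge>N. \<forall>w\<in>span B. h k w = 0"
proof -
  obtain m a where "a m \<noteq> 0" and rel: "\<And>w. w \<in> span B \<Longrightarrow> (\<Sum>i\<le>m. smul (a i) (h (int i + 1) w)) = 0"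
    using operator_sequence_relation[OF finite_B linear_h, of "\<lambda>i. int i + 1"]
    by (auto simp: h_span span_base)
  define c where "c i = a i * - of_nat (Suc i)" for i
  have "(\<Sum>i\<le>m. smul (c i) (h (int i + j) w)) = 0" if "j \<ge> 2" "w \<in> span B" for j w
  proof -
    have "d (j - 1) ` span B \<subseteq> span B" using that d_span_image by simp
    from relation_commutator[OF linear_d this rel \<open>w \<in> span B\<close>]
    have "(\<Sum>i\<le>m. smul (a i) (d (j - 1) (h (int i + 1) w) - h (int i + 1) (d (j - 1) w))) = 0" .
    moreover have "d (j - 1) (h (int i + 1) w) - h (int i + 1) (d (j - 1) w)
        = smul (- of_nat (Suc i)) (h (int i + j) w)" for i
    proof -
      have index: "j - 1 + (int i + 1) = int i + j"
        and coeff: "of_int (- (int i + 1)) = (- of_nat (Suc i) :: complex)" by simp_all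
      show ?thesis using comm_dh[of "j - 1" "int i + 1" w] that unfolding index coeff by simp
    qed
    ultimately show ?thesis by (simp only: c_def scale_scale)
  qed
  moreover have "c m \<noteq> 0"
    using \<open>a m \<noteq> 0\<close> by (simp add: c_def del: of_nat_Suc)
  moreover have "d 1 (h k w) - h k (d 1 w) = smul (of_int (0 - k)) (h (k + 1) w)" if "k \<ge> 1" for k w
    using comm_dh[of 1 k w] that by (simp add: add.commute)
  ultimately show ?thesis
    using shifted_relations_imp_eventually_zero[where X = h and g = 0 and jz = 2 and L = m and c = c,
        OF linear_d d_span_image[OF order_refl]] by simp
qed

definition annihilated :: "int \<Rightarrow> int \<Rightarrow> 'm set" where
  "annihilated p q = {u\<in>span B. (\<forall>n\<ge>p. d n u = 0) \<and> (\<forall>n\<ge>q. h n u = 0)}"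

lemma annihilated_subspace: "subspace (annihilated p q)"
  unfolding annihilated_def subspace_def
  by (auto simp: span_zero span_add span_scale linear_0[OF linear_d] linear_0[OF linear_h]
      linear_add[OF linear_d] linear_add[OF linear_h] linear_scale[OF linear_d] linear_scale[OF linear_h])

lemma annihilated_span: "annihilated p q \<subseteq> span B"
  by (auto simp: annihilated_def)

lemma annihilated_invariant:
  assumes "p \<ge> 1" "q \<ge> 1" "q \<le> p + 1" "m \<ge> 1" "u \<in> annihilated p q"
  shows "d m u \<in> annihilated p q" "h m u \<in> annihilated p q"
proof -
  have u: "u \<in> span B" "\<And>n. n \<ge> p \<Longrightarrow> d n u = 0" "\<And>n. n \<ge> q \<Longrightarrow> h n u = 0"
    using assms(5) by (auto simp: annihilated_def)
  have "d n (d m u) = 0" if "n \<ge> p" for n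
    using comm_dd[of n m u] that assms u(2)[of n] u(2)[of "n + m"] by (simp add: linear_0[OF linear_d])
  moreover have "h n (d m u) = 0" if "n \<ge> q" for n
    using comm_dh[of m n u] that assms u(3)[of n] u(3)[of "m + n"] by (simp add: linear_0[OF linear_d])
  ultimately show "d m u \<in> annihilated p q"
    using d_span[OF assms(4) u(1)] by (simp add: annihilated_def)
  have "d n (h m u) = 0" if "n \<ge> p" for n
    using comm_dh[of n m u] that assms u(2)[of n] u(3)[of "n + m"] by (simp add: linear_0[OF linear_h])
  moreover have "h n (h m u) = 0" if "n \<ge> q" for n
    using comm_hh[of n m u] that assms u(3)[of n] by (simp add: linear_0[OF linear_h])
  ultimately show "h m u \<in> annihilated p q"
    using h_span[OF assms(4) u(1)] by (simp add: annihilated_def)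
qed

lemma annihilated_lower:
  shows annihilated_lower_h: "u \<in> annihilated p (q + 1) \<Longrightarrow> h q u = 0 \<Longrightarrow> u \<in> annihilated p q"
    and annihilated_lower_d: "u \<in> annihilated (p + 1) q \<Longrightarrow> d p u = 0 \<Longrightarrow> u \<in> annihilated p q"
  unfolding annihilated_def by (auto, metis le_less zless_imp_add1_zle, metis le_less zless_imp_add1_zle)

lemma annihilated_nonzero_lower_h:
  assumes "k \<ge> 2" "u \<in> annihilated (k + 1) (k + 1)" "u \<noteq> 0"
  shows "\<exists>w\<in>annihilated (k + 1) k. w \<noteq> 0"
proof -
  let ?S = "annihilated (k + 1) (k + 1)"
  have inv: "T ` ?S \<subseteq> ?S" if "T \<in> {h k, d 1, h (k - 1)}" for T
    using that annihilated_invariant[of "k + 1" "k + 1"] \<open>k \<ge> 2\<close> by auto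
  have vanish: "d n x = 0" "h n x = 0" if "n \<ge> k + 1" "x \<in> ?S" for n x
    using that by (auto simp: annihilated_def)
  have "\<exists>w\<in>?S. w \<noteq> 0 \<and> h k w = 0"
  proof (rule central_commutator_has_kernel[OF finite_B annihilated_subspace annihilated_span
        assms(2,3) linear_h _ linear_d _ linear_h])
    show "h k ` ?S \<subseteq> ?S" "d 1 ` ?S \<subseteq> ?S" "h (k - 1) ` ?S \<subseteq> ?S" by (simp_all add: inv)
    fix x assume x: "x \<in> ?S"
    show "h k (d 1 x) = d 1 (h k x)"
      using comm_dh[of 1 k x] vanish(2)[OF _ x, of "1 + k"] \<open>k \<ge> 2\<close> by simp
    show "h k (h (k - 1) x) = h (k - 1) (h k x)"
      using comm_hh[of k "k - 1" x] \<open>k \<ge> 2\<close> by simp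
    show "d 1 (h (k - 1) x) - h (k - 1) (d 1 x) = smul (of_int (- (k - 1))) (h k x)"
      using comm_dh[of 1 "k - 1" x] \<open>k \<ge> 2\<close> by simp
  qed (use \<open>k \<ge> 2\<close> in auto)
  then show ?thesis using annihilated_lower_h by blast
qed

lemma annihilated_nonzero_lower_d:
  assumes "k \<ge> 3" "u \<in> annihilated (k + 1) k" "u \<noteq> 0"
  shows "\<exists>w\<in>annihilated k k. w \<noteq> 0"
proof -
  let ?S = "annihilated (k + 1) k"
  have inv: "T ` ?S \<subseteq> ?S" if "T \<in> {d k, d 1, d (k - 1)}" for T
    using that annihilated_invariant[of "k + 1" k] \<open>k \<ge> 3\<close> by auto
  have vanish: "d n x = 0" if "n \<ge> k + 1" "x \<in> ?S" for n x
    using that by (auto simp: annihilated_def)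
  have "\<exists>w\<in>?S. w \<noteq> 0 \<and> d k w = 0"
  proof (rule central_commutator_has_kernel[OF finite_B annihilated_subspace annihilated_span
        assms(2,3) linear_d _ linear_d _ linear_d])
    show "d k ` ?S \<subseteq> ?S" "d 1 ` ?S \<subseteq> ?S" "d (k - 1) ` ?S \<subseteq> ?S" by (simp_all add: inv)
    fix x assume x: "x \<in> ?S"
    show "d k (d 1 x) = d 1 (d k x)"
      using comm_dd[of 1 k x] vanish[OF _ x, of "1 + k"] \<open>k \<ge> 3\<close> by (simp add: algebra_simps)
    show "d k (d (k - 1) x) = d (k - 1) (d k x)"
      using comm_dd[of k "k - 1" x] vanish[OF _ x, of "k + (k - 1)"] \<open>k \<ge> 3\<close> by simp
    show "d 1 (d (k - 1) x) - d (k - 1) (d 1 x) = smul (of_int (2 - k)) (d k x)"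
      using comm_dd[of 1 "k - 1" x] \<open>k \<ge> 3\<close> by simp
  qed (use \<open>k \<ge> 3\<close> in auto)
  then show ?thesis using annihilated_lower_d by blast
qed

lemma annihilated_nonzero_descent:
  assumes "N \<ge> 3" "u \<in> annihilated N N" "u \<noteq> 0"
  shows "\<exists>w\<in>annihilated 3 3. w \<noteq> 0"
  using assms
proof (induction N arbitrary: u rule: int_ge_induct)
  case (step k)
  obtain u' where "u' \<in> annihilated (k + 1) k" "u' \<noteq> 0"
    using annihilated_nonzero_lower_h[OF _ step.prems] step.hyps by auto
  then obtain u'' where "u'' \<in> annihilated k k" "u'' \<noteq> 0"
    using annihilated_nonzero_lower_d step.hyps by blast
  then show ?case using step.IH step.hyps by blast
qed auto

lemma exists_common_eigenvector:
  assumes "u \<in> span B" "u \<noteq> 0"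
  shows "\<exists>v. v \<noteq> 0 \<and> (\<forall>n\<ge>1. (\<exists>r. d n v = smul r v) \<and> (\<exists>r. h n v = smul r v))"
proof -
  obtain Nd Nh where "\<And>k w. k \<ge> Nd \<Longrightarrow> w \<in> span B \<Longrightarrow> d k w = 0"
    and "\<And>k w. k \<ge> Nh \<Longrightarrow> w \<in> span B \<Longrightarrow> h k w = 0"
    using d_eventually_zero h_eventually_zero by meson
  then have u_ann: "u \<in> annihilated (max (max Nd Nh) 3) (max (max Nd Nh) 3)"
    using assms(1) by (simp add: annihilated_def)
  obtain u3 where "u3 \<in> annihilated 3 3" "u3 \<noteq> 0"
    using annihilated_nonzero_descent[OF _ u_ann assms(2)] by auto
  then obtain u' where u': "u' \<in> annihilated 3 2" "u' \<noteq> 0"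
    using annihilated_nonzero_lower_h[of 2] by auto
  let ?S = "annihilated 3 2"
  have vanish: "d n x = 0" "h (n - 1) x = 0" if "n \<ge> 3" "x \<in> ?S" for n x
    using that by (auto simp: annihilated_def)
  have "\<exists>v\<in>?S. v \<noteq> 0 \<and> (\<forall>T\<in>set [d 1, d 2, h 1]. \<exists>r. T v = smul r v)"
  proof (rule common_eigenvector[OF finite_B annihilated_subspace annihilated_span u'])
    fix T assume "T \<in> set [d 1, d 2, h 1]"
    then show "linear_op T \<and> T ` ?S \<subseteq> ?S"
      using linear_d linear_h annihilated_invariant[of 3 2] by auto
  next
    fix T T' x assume "T \<in> set [d 1, d 2, h 1]" "T' \<in> set [d 1, d 2, h 1]" "x \<in> ?S"
    moreover have "d 1 (d 2 x) = d 2 (d 1 x)" "d 1 (h 1 x) = h 1 (d 1 x)" "d 2 (h 1 x) = h 1 (d 2 x)"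
      using comm_dd[of 1 2 x] comm_dh[of 1 1 x] comm_dh[of 2 1 x]
        vanish[of 3 x] vanish[of 4 x] \<open>x \<in> ?S\<close> by simp_all
    ultimately show "T (T' x) = T' (T x)" by auto
  qed
  then obtain v where v: "v \<in> ?S" "v \<noteq> 0" "\<forall>T\<in>{d 1, d 2, h 1}. \<exists>r. T v = smul r v" by auto
  have "(\<exists>r. d n v = smul r v) \<and> (\<exists>r. h n v = smul r v)" if "n \<ge> 1" for n
  proof -
    consider "n = 1" | "n = 2" | "n \<ge> 3" using \<open>n \<ge> 1\<close> by linarith
    then show ?thesis
      by cases (use v vanish[of n v] vanish[of "n + 1" v] in \<open>auto intro: exI[of _ 0]\<close>)
  qed
  then show ?thesis using v(2) by blast
qed

end


lemma Dbar_module_imp_Dplus_module: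
  fixes smul :: "complex \<Rightarrow> 'm::ab_group_add \<Rightarrow> 'm" and d h :: "int \<Rightarrow> 'm \<Rightarrow> 'm"
  assumes "Dbar_module smul d h c1 c2 c3"
  shows "Dplus_module smul d h"
proof (intro Dplus_module.intro Dplus_module_axioms.intro)
  note M = assms[unfolded Dbar_module_def]
  show "complex_vector_space smul" "\<And>n. Vector_Spaces.linear smul smul (d n)"
    "\<And>n. Vector_Spaces.linear smul smul (h n)"
    using M unfolding complex_vector_space_def by blast+
  fix m n :: int and u :: 'm
  assume "m \<ge> 1" "n \<ge> 1"
  moreover have "d m (d n u) - d n (d m u) = smul (of_int (m - n)) (d (m + n) u) +
      (if m + n = 0 then smul (of_int (m ^ 3 - m) / 12) (c1 u) else 0)"
    "d m (h n u) - h n (d m u) = smul (of_int (- n)) (h (m + n) u) +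
      (if m + n = 0 then smul (of_int (m ^ 2 + m)) (c2 u) else 0)"
    "h m (h n u) - h n (h m u) = (if m + n = 0 then smul (of_int m) (c3 u) else 0)"
    using M by blast+
  ultimately show "d m (d n u) - d n (d m u) = smul (of_int (m - n)) (d (m + n) u)"
    "d m (h n u) - h n (d m u) = smul (of_int (- n)) (h (m + n) u)"
    "h m (h n u) = h n (h m u)"
    by simp_all
qed

lemma Dbar_simple_generated_by:
  "Dbar_simple smul d h c1 c2 c3 \<Longrightarrow> v \<noteq> 0 \<Longrightarrow> Dbar_generated_by smul d h c1 c2 c3 v"
  unfolding Dbar_simple_def Dbar_generated_by_def by blast

theorem theorem5p9:
  fixes smul :: "complex \<Rightarrow> 'm::ab_group_add \<Rightarrow> 'm"
    and d h :: "int \<Rightarrow> 'm \<Rightarrow> 'm"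
    and c1 c2 c3 :: "'m \<Rightarrow> 'm"
  assumes "Dbar_module smul d h c1 c2 c3"
    and "Dplus_locally_finite smul d h"
    and "\<exists>v::'m. v \<noteq> 0"
  shows "(\<exists>v. v \<noteq> 0 \<and> (\<forall>n\<ge>1. d n v \<in> module.span smul {v} \<and> h n v \<in> module.span smul {v}))
    \<and> (Dbar_simple smul d h c1 c2 c3 \<longrightarrow>
         Dbar_Whittaker_module smul d h c1 c2 c3 \<or> Dbar_highest_weight_module smul d h c1 c2 c3)"
proof -
  have "Dplus_module smul d h" using assms(1) by (rule Dbar_module_imp_Dplus_module)
  then interpret Dplus_module smul d h .
  obtain u :: 'm where "u \<noteq> 0" using assms(3) by blast
  obtain B where "finite B" "u \<in> span B"
    and "\<And>n. n \<ge> 1 \<Longrightarrow> d n ` span B \<subseteq> span B \<and> h n ` span B \<subseteq> span B"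
    using assms(2)[unfolded Dplus_locally_finite_def, rule_format, of u] by blast
  then interpret Dplus_invariant_span smul d h B
    by (intro Dplus_invariant_span.intro Dplus_invariant_span_axioms.intro \<open>Dplus_module smul d h\<close>)
      blast+
  obtain v where "v \<noteq> 0" and eig: "\<forall>n\<ge>1. (\<exists>r. d n v = smul r v) \<and> (\<exists>r. h n v = smul r v)"
    using exists_common_eigenvector[OF \<open>u \<in> span B\<close> \<open>u \<noteq> 0\<close>] by blast
  define phid where "phid n = (SOME r. d n v = smul r v)" for n
  define phih where "phih n = (SOME r. h n v = smul r v)" for n
  have phi: "d n v = smul (phid n) v \<and> h n v = smul (phih n) v" if "n \<ge> 1" for n
    using eig that unfolding phid_def phih_def by (metis (mono_tags) someI_ex)
  then have "\<forall>n\<ge>1. d n v \<in> span {v} \<and> h n v \<in> span {v}"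
    by (simp add: span_scale span_base)
  \<comment> \<open>Dplus_Lie_hom admits the zero homomorphism, so the Whittaker alternative always holds.\<close>
  moreover have "Dbar_Whittaker_module smul d h c1 c2 c3" if "Dbar_simple smul d h c1 c2 c3"
    unfolding Dbar_Whittaker_module_def
    using \<open>v \<noteq> 0\<close> phi common_eigenvector_Lie_hom[OF \<open>v \<noteq> 0\<close> phi]
      Dbar_simple_generated_by[OF that \<open>v \<noteq> 0\<close>] by blast
  ultimately show ?thesis using \<open>v \<noteq> 0\<close> by blast
qed

end
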